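(* Let $\mathcal E:\mathbb R^d\to\mathbb R$ be continuous and positive with $\underline{\mathcal E}:=\inf\mathcal E$ and $\overline{\mathcal E}:=\sup\mathcal E$ finite, and let $\lambda\ge0$, $\sigma\ge0$, $\alpha>0$, $C_{\alpha,\mathcal E}:=e^{\alpha(\overline{\mathcal E}-\underline{\mathcal E})}$. Let $f(v,t)$ be a family of probability densities on $\mathbb R^d$ (with finite second moments) solving the Boltzmann-type equation with macroscopic best estimate only, described in the context. Then for all $t>0$ $$V(t)\le V(0)\exp\big(-(2\lambda-\lambda^2C_{\alpha,\mathcal E}-\sigma^2\kappa C_{\alpha,\mathcal E})t\big).$$ Therefore $V(t)\to0$ as $t\to\infty$ if $\sigma^2<\frac{\lambda}{\kappa}\big(\frac{2}{C_{\alpha,\mathcal E}}-\lambda\big)$.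
   Context: Let $v_{\alpha,\mathcal E}(t):=\frac{\int v e^{-\alpha\mathcal E(v)}f(v,t)\,dv}{\int e^{-\alpha\mathcal E(v)}f(v,t)\,dv}$. The binary interaction is $v'=v+\lambda(v_{\alpha,\mathcal E}(t)-v)+\sigma D(v)\xi$, where $\xi\in\mathbb R^d$ is a random vector of i.i.d. components with zero mean and unit variance, and $D(v)$ is diagonal, either isotropic $D(v)=\|v_{\alpha,\mathcal E}(t)-v\|_2I_d$ (then $\kappa:=d$) or anisotropic $D(v)=\mathrm{diag}\{(v_{\alpha,\mathcal E}(t)-v)_1,\dots,(v_{\alpha,\mathcal E}(t)-v)_d\}$ (then $\kappa:=1$). The density $f$ satisfies, for test functions $\phi$ (including $\phi(v)=v$ and $\phi(v)=|v|^2$), $$\frac{d}{dt}\int f(v,t)\phi(v)\,dv=\Big\langle\int_{\mathbb R^{2d}}(\phi(v')-\phi(v))f(v,t)f(v_*,t)\,dv\,dv_*\Big\rangle,$$ with $\langle\cdot\rangle$ the expectation over the random vector. Here $m(t):=\int vf(v,t)\,dv$ and $V(t):=\frac12\int|v-m(t)|^2f(v,t)\,dv$. *)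

theory Defs
  imports "HOL-Probability.Probability"
begin

datatype diffusion = Isotropic | Anisotropic

definition kappa :: "diffusion \<Rightarrow> nat \<Rightarrow> real" where
  "kappa D d = (case D of Isotropic \<Rightarrow> real d | Anisotropic \<Rightarrow> 1)"

text \<open>D(v) xi, where w = v_alpha - v.\<close>
definition noise :: "diffusion \<Rightarrow> real^'d \<Rightarrow> real^'d \<Rightarrow> real^'d" where
  "noise D w xi = (case D of Isotropic \<Rightarrow> norm w *\<^sub>R xi
                             | Anisotropic \<Rightarrow> (\<chi> i. w $ i * xi $ i))"

definition v_alpha :: "real \<Rightarrow> (real^'d \<Rightarrow> real) \<Rightarrow> (real^'d \<Rightarrow> real) \<Rightarrow> real^'d" where
  "v_alpha alpha E g =
     (LINT v|lborel. (exp (- alpha * E v) * g v) *\<^sub>R v) /\<^sub>R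
     (LINT v|lborel. exp (- alpha * E v) * g v)"

definition post :: "real \<Rightarrow> real \<Rightarrow> diffusion \<Rightarrow> real^'d \<Rightarrow> real^'d \<Rightarrow> real^'d \<Rightarrow> real^'d" where
  "post lam sig D va v xi = v + lam *\<^sub>R (va - v) + sig *\<^sub>R noise D (va - v) xi"

definition collision_rhs ::
  "real \<Rightarrow> real \<Rightarrow> diffusion \<Rightarrow> real \<Rightarrow> (real^'d \<Rightarrow> real) \<Rightarrow> (real^'d) measure
   \<Rightarrow> (real^'d \<Rightarrow> real) \<Rightarrow> (real^'d \<Rightarrow> 'b::{banach,second_countable_topology}) \<Rightarrow> 'b" where
  "collision_rhs lam sig D alpha E Xi g phi =
     (LINT xi|Xi. (LINT p|(lborel \<Otimes>\<^sub>M lborel).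
        (g (fst p) * g (snd p)) *\<^sub>R
          (phi (post lam sig D (v_alpha alpha E g) (fst p) xi) - phi (fst p))))"

definition mean :: "(real^'d \<Rightarrow> real) \<Rightarrow> real^'d" where
  "mean g = (LINT v|lborel. g v *\<^sub>R v)"

definition Var :: "(real^'d \<Rightarrow> real) \<Rightarrow> real" where
  "Var g = 1/2 * (LINT v|lborel. (norm (v - mean g))\<^sup>2 * g v)"

end

theory Submission
  imports Defs
begin

text \<open>
  Testing the weak form with phi(v) = v and phi(v) = |v|^2 gives m' = lambda (v_alpha - m) and an
  energy balance in which the noise enters only through <xi_i> = 0 and <xi_i^2> = 1; together,
  V' = -2 lambda V + (lambda^2 + sigma^2 kappa)/2 * int |v - v_alpha|^2 f.
  Since v_alpha is the barycentre of f weighted by exp(-alpha E), it minimises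
  x |-> int exp(-alpha E) |v - x|^2 f; bounding the weight between exp(-alpha sup E) and
  exp(-alpha inf E) and comparing with x = m gives int |v - v_alpha|^2 f <= 2 C V, and Gronwall's
  inequality yields the exponential decay.
\<close>

lemma integrable_vec_componentwise:
  fixes f :: "'a \<Rightarrow> real^'n"
  assumes "\<And>i. integrable M (\<lambda>x. f x $ i)"
  shows "integrable M f"
proof -
  have "f x = (\<Sum>i\<in>UNIV. (f x $ i) *\<^sub>R axis i 1)" for x
    using basis_expansion[of "f x"] by (simp add: scalar_mult_eq_scaleR)
  then have "f = (\<lambda>x. \<Sum>i\<in>UNIV. (f x $ i) *\<^sub>R axis i 1)"
    by blast
  moreover have "integrable M (\<lambda>x. \<Sum>i\<in>UNIV. (f x $ i) *\<^sub>R axis i (1::real))"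
    using assms by simp
  ultimately show ?thesis
    by simp
qed

lemma integral_vec_nth:
  fixes f :: "'a \<Rightarrow> real^'n"
  assumes "integrable M f"
  shows "integral\<^sup>L M f $ i = (\<integral>x. f x $ i \<partial>M)"
  using integral_bounded_linear[OF bounded_linear_vec_nth assms] by simp

lemma integral_product_scaleR:
  fixes F :: "'a \<Rightarrow> 'b::{banach,second_countable_topology}" and g :: "'c \<Rightarrow> real"
  assumes "sigma_finite_measure M1" "sigma_finite_measure M2"
    and F: "integrable M1 F" and g: "integrable M2 g"
  shows "(\<integral>p. g (snd p) *\<^sub>R F (fst p) \<partial>(M1 \<Otimes>\<^sub>M M2)) = integral\<^sup>L M2 g *\<^sub>R integral\<^sup>L M1 F"
proof -
  interpret pair_sigma_finite M1 M2
    using assms by (simp add: pair_sigma_finite_def)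
  have [measurable]: "F \<in> borel_measurable M1" "g \<in> borel_measurable M2"
    using F g by auto
  have "integrable (M1 \<Otimes>\<^sub>M M2) (\<lambda>p. g (snd p) *\<^sub>R F (fst p))"
  proof (rule Fubini_integrable)
    have "(\<lambda>x. \<integral>y. norm (g y *\<^sub>R F x) \<partial>M2) = (\<lambda>x. (\<integral>y. norm (g y) \<partial>M2) * norm (F x))"
      by (simp add: mult.commute)
    then show "integrable M1 (\<lambda>x. \<integral>y. norm (g (snd (x, y)) *\<^sub>R F (fst (x, y))) \<partial>M2)"
      using F by (simp add: integrable_norm)
  qed (use g in simp_all)
  then have "(\<integral>p. g (snd p) *\<^sub>R F (fst p) \<partial>(M1 \<Otimes>\<^sub>M M2)) = (\<integral>x. (\<integral>y. g y *\<^sub>R F x \<partial>M2) \<partial>M1)"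
    using integral_fst[of "\<lambda>x y. g y *\<^sub>R F x"] by (simp add: split_beta')
  also have "\<dots> = integral\<^sup>L M2 g *\<^sub>R integral\<^sup>L M1 F"
    using g by (simp add: integral_scaleR_left)
  finally show ?thesis .
qed

lemma integrable_scaleR_bounded:
  fixes f :: "'a \<Rightarrow> 'b::{banach,second_countable_topology}"
  assumes f: "integrable M f" and w: "w \<in> borel_measurable M" and bound: "\<And>x. \<bar>w x\<bar> \<le> B"
  shows "integrable M (\<lambda>x. w x *\<^sub>R f x)"
proof (rule Bochner_Integration.integrable_bound[where f="\<lambda>x. B *\<^sub>R f x"])
  show "AE x in M. norm (w x *\<^sub>R f x) \<le> norm (B *\<^sub>R f x)"
  proof (rule AE_I2)
    fix x
    have "\<bar>w x\<bar> \<le> \<bar>B\<bar>"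
      using bound[of x] abs_ge_self[of B] by linarith
    then show "norm (w x *\<^sub>R f x) \<le> norm (B *\<^sub>R f x)"
      by (simp add: mult_right_mono)
  qed
qed (use f w in auto)

lemma norm_diff_le_mult: "norm (a - v) \<le> (1 + norm a) * (1 + norm (v::'a::real_normed_vector))"
proof -
  have "norm (a - v) \<le> norm a + norm v"
    by (rule norm_triangle_ineq4)
  also have "\<dots> \<le> (1 + norm a) * (1 + norm v)"
    by (simp add: algebra_simps)
  finally show ?thesis .
qed

lemma mult_norm_diff_sq_eq:
  fixes v x :: "'a::real_inner"
  shows "h * (norm (v - x))\<^sup>2 = h * (norm v)\<^sup>2 - 2 * ((h *\<^sub>R v) \<bullet> x) + (norm x)\<^sup>2 * h"
  by (simp add: power2_norm_eq_inner inner_diff_left inner_diff_right inner_commute algebra_simps)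

lemma integrable_weighted_norm_diff_sq:
  fixes h :: "'a::euclidean_space \<Rightarrow> real"
  assumes "integrable M h" "integrable M (\<lambda>v. h v *\<^sub>R v)" "integrable M (\<lambda>v. h v * (norm v)\<^sup>2)"
  shows "integrable M (\<lambda>v. h v * (norm (v - x))\<^sup>2)"
  unfolding mult_norm_diff_sq_eq
  by (intro Bochner_Integration.integrable_add Bochner_Integration.integrable_diff integrable_mult_right
      integrable_inner_left assms)

lemma integral_weighted_norm_diff_sq:
  fixes h :: "'a::euclidean_space \<Rightarrow> real"
  assumes "integrable M h" "integrable M (\<lambda>v. h v *\<^sub>R v)" "integrable M (\<lambda>v. h v * (norm v)\<^sup>2)"
  shows "(\<integral>v. h v * (norm (v - x))\<^sup>2 \<partial>M) =
    (\<integral>v. h v * (norm v)\<^sup>2 \<partial>M) - 2 * ((\<integral>v. h v *\<^sub>R v \<partial>M) \<bullet> x) + (norm x)\<^sup>2 * integral\<^sup>L M h"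
  unfolding mult_norm_diff_sq_eq using assms by (simp del: inner_scaleR_left)

lemma weighted_mean_minimizes_integral_norm_diff_sq:
  fixes h :: "'a::euclidean_space \<Rightarrow> real"
  assumes h: "integrable M h" "integrable M (\<lambda>v. h v *\<^sub>R v)" "integrable M (\<lambda>v. h v * (norm v)\<^sup>2)"
    and pos: "integral\<^sup>L M h > 0"
  shows "(\<integral>v. h v * (norm (v - (\<integral>v. h v *\<^sub>R v \<partial>M) /\<^sub>R integral\<^sup>L M h))\<^sup>2 \<partial>M)
    \<le> (\<integral>v. h v * (norm (v - x))\<^sup>2 \<partial>M)"
proof -
  define Z where "Z = integral\<^sup>L M h"
  define y where "y = (\<integral>v. h v *\<^sub>R v \<partial>M) /\<^sub>R Z"
  have "(\<integral>v. h v *\<^sub>R v \<partial>M) = Z *\<^sub>R y"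
    using pos by (simp add: y_def Z_def)
  then have "(\<integral>v. h v * (norm (v - x))\<^sup>2 \<partial>M) - (\<integral>v. h v * (norm (v - y))\<^sup>2 \<partial>M) = Z * (norm (x - y))\<^sup>2"
    unfolding integral_weighted_norm_diff_sq[OF h] Z_def[symmetric]
    by (simp add: power2_norm_eq_inner inner_diff_left inner_diff_right inner_commute algebra_simps)
  moreover have "0 \<le> Z * (norm (x - y))\<^sup>2"
    using pos by (simp add: Z_def)
  ultimately show ?thesis
    by (simp add: y_def Z_def)
qed

definition noise_coeff :: "diffusion \<Rightarrow> real^'d \<Rightarrow> 'd \<Rightarrow> real" where
  "noise_coeff D w i = (case D of Isotropic \<Rightarrow> norm w | Anisotropic \<Rightarrow> w $ i)"

lemma noise_nth: "noise D w xi $ i = noise_coeff D w i * xi $ i"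
  by (cases D) (simp_all add: noise_def noise_coeff_def)

lemma abs_noise_coeff_le: "\<bar>noise_coeff D w i\<bar> \<le> norm w"
  by (cases D) (auto simp: noise_coeff_def component_le_norm_cart)

lemma sum_noise_coeff_sq:
  fixes w :: "real^'d"
  shows "(\<Sum>i\<in>UNIV. (noise_coeff D w i)\<^sup>2) = kappa D CARD('d) * (norm w)\<^sup>2"
proof -
  have "(norm w)\<^sup>2 = (\<Sum>i\<in>UNIV. (w $ i)\<^sup>2)"
    unfolding power2_norm_eq_inner inner_vec_def by (simp add: power2_eq_square)
  then show ?thesis
    by (cases D) (simp_all add: noise_coeff_def kappa_def)
qed

lemma kappa_pos: "0 < kappa D CARD('d::finite)"
  by (cases D) (simp_all add: kappa_def)

lemma borel_measurable_noise_coeff [measurable]: "(\<lambda>w. noise_coeff D w i) \<in> borel_measurable borel"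
  unfolding noise_coeff_def by (cases D) (auto intro!: borel_measurable_continuous_onI continuous_intros)

lemma norm_post_sq_diff:
  fixes a v xi :: "real^'d"
  shows "(norm (post lam sig D a v xi))\<^sup>2 - (norm v)\<^sup>2 =
      2 * lam * (v \<bullet> a - (norm v)\<^sup>2) + lam\<^sup>2 * (norm (v - a))\<^sup>2
    + (\<Sum>i\<in>UNIV. xi $ i * (2 * sig * ((v + lam *\<^sub>R (a - v)) $ i * noise_coeff D (a - v) i)))
    + (\<Sum>i\<in>UNIV. (xi $ i)\<^sup>2 * (sig\<^sup>2 * (noise_coeff D (a - v) i)\<^sup>2))"
proof -
  define u where "u = v + lam *\<^sub>R (a - v)"
  define N where "N = noise D (a - v) xi"
  have "post lam sig D a v xi = u + sig *\<^sub>R N"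
    by (simp add: post_def u_def N_def)
  then have "(norm (post lam sig D a v xi))\<^sup>2 = (norm u)\<^sup>2 + 2 * sig * (u \<bullet> N) + sig\<^sup>2 * (N \<bullet> N)"
    unfolding power2_norm_eq_inner
    by (simp add: inner_add_left inner_add_right inner_commute algebra_simps power2_eq_square)
  moreover have "(norm u)\<^sup>2 = (norm v)\<^sup>2 + 2 * lam * (v \<bullet> a - (norm v)\<^sup>2) + lam\<^sup>2 * (norm (v - a))\<^sup>2"
    unfolding u_def power2_norm_eq_inner
    by (simp add: inner_add_left inner_add_right inner_diff_left inner_diff_right inner_commute
        algebra_simps power2_eq_square)
  moreover have "2 * sig * (u \<bullet> N) = (\<Sum>i\<in>UNIV. xi $ i * (2 * sig * (u $ i * noise_coeff D (a - v) i)))"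
    by (simp add: inner_vec_def N_def noise_nth sum_distrib_left mult_ac)
  moreover have "sig\<^sup>2 * (N \<bullet> N) = (\<Sum>i\<in>UNIV. (xi $ i)\<^sup>2 * (sig\<^sup>2 * (noise_coeff D (a - v) i)\<^sup>2))"
    by (simp add: inner_vec_def N_def noise_nth sum_distrib_left power_mult_distrib power2_eq_square mult_ac)
  ultimately show ?thesis
    by (simp add: u_def)
qed

lemma integral_affine_in_components:
  fixes M :: "(real^'d) measure"
  assumes "prob_space M" and mean: "\<And>i. integrable M (\<lambda>x. x $ i) \<and> (\<integral>x. x $ i \<partial>M) = 0"
  shows "(\<integral>x. b + (\<chi> i. c i * x $ i) \<partial>M) = b"
proof -
  interpret prob_space M by fact
  have int: "integrable M (\<lambda>x. \<chi> i. c i * x $ i :: real^'d)"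
    by (rule integrable_vec_componentwise) (use mean in simp)
  then have "(\<integral>x. (\<chi> i. c i * x $ i) \<partial>M) = (0 :: real^'d)"
    using mean by (simp add: vec_eq_iff integral_vec_nth)
  then show ?thesis
    using int by (simp add: Bochner_Integration.integral_add prob_space)
qed

lemma integral_quadratic_in_components:
  fixes M :: "(real^'d) measure"
  assumes "prob_space M"
    and mean: "\<And>i. integrable M (\<lambda>x. x $ i) \<and> (\<integral>x. x $ i \<partial>M) = 0"
    and var: "\<And>i. integrable M (\<lambda>x. (x $ i)\<^sup>2) \<and> prob_space.variance M (\<lambda>x. x $ i) = 1"
  shows "(\<integral>x. A + (\<Sum>i\<in>UNIV. x $ i * Q i) + (\<Sum>i\<in>UNIV. (x $ i)\<^sup>2 * R i) \<partial>M) = A + (\<Sum>i\<in>UNIV. R i)"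
proof -
  interpret prob_space M by fact
  have "(\<integral>x. (x $ i)\<^sup>2 \<partial>M) = 1" for i
    using mean[of i] var[of i] by simp
  then show ?thesis
    using mean var by (simp add: Bochner_Integration.integral_add prob_space)
qed

locale second_moment_density =
  fixes g :: "real^'d \<Rightarrow> real"
  assumes measurable_density [measurable]: "g \<in> borel_measurable lborel"
    and density_nonneg: "\<And>v. 0 \<le> g v"
    and integrable_density: "integrable lborel g"
    and density_mass: "(\<integral>v. g v \<partial>lborel) = 1"
    and integrable_second_moment: "integrable lborel (\<lambda>v. (norm v)\<^sup>2 * g v)"
begin

lemma integrable_quadratic_growth:
  fixes P :: "real^'d \<Rightarrow> 'b::{banach,second_countable_topology}"
  assumes [measurable]: "P \<in> borel_measurable lborel"
    and growth: "\<And>v. norm (P v) \<le> K * (1 + norm v)\<^sup>2"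
  shows "integrable lborel (\<lambda>v. g v *\<^sub>R P v)"
proof (rule Bochner_Integration.integrable_bound)
  show "integrable lborel (\<lambda>v. 2 * K * (g v + (norm v)\<^sup>2 * g v))"
    using integrable_density integrable_second_moment by simp
  have "0 \<le> K"
    using order_trans[OF norm_ge_zero growth[of 0]] by simp
  show "AE v in lborel. norm (g v *\<^sub>R P v) \<le> norm (2 * K * (g v + (norm v)\<^sup>2 * g v))"
  proof (rule AE_I2)
    fix v :: "real^'d"
    have "(1 + norm v)\<^sup>2 \<le> 2 * (1 + (norm v)\<^sup>2)"
      using zero_le_power2[of "norm v - 1"] by (simp add: power2_sum power2_diff)
    then have "K * (1 + norm v)\<^sup>2 \<le> K * (2 * (1 + (norm v)\<^sup>2))"
      using \<open>0 \<le> K\<close> by (rule mult_left_mono)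
    then have "norm (P v) \<le> 2 * K * (1 + (norm v)\<^sup>2)"
      using growth[of v] by linarith
    then have "g v * norm (P v) \<le> g v * (2 * K * (1 + (norm v)\<^sup>2))"
      by (rule mult_left_mono) (rule density_nonneg)
    also have "\<dots> = 2 * K * (g v + (norm v)\<^sup>2 * g v)"
      by (simp add: algebra_simps)
    finally show "norm (g v *\<^sub>R P v) \<le> norm (2 * K * (g v + (norm v)\<^sup>2 * g v))"
      using density_nonneg[of v] by simp
  qed
qed simp

lemma integrable_mult_quadratic_growth:
  fixes P :: "real^'d \<Rightarrow> real"
  assumes "P \<in> borel_measurable lborel" and "\<And>v. \<bar>P v\<bar> \<le> K * (1 + norm v)\<^sup>2"
  shows "integrable lborel (\<lambda>v. g v * P v)"
  using integrable_quadratic_growth[of P K] assms by simp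

lemma integrable_scaleR_id: "integrable lborel (\<lambda>v. g v *\<^sub>R v)"
  by (rule integrable_quadratic_growth[where K=1]) (simp_all add: power2_sum)

lemma integrable_norm_sq: "integrable lborel (\<lambda>v. g v * (norm v)\<^sup>2)"
  using integrable_second_moment by (simp add: mult.commute)

lemma integrable_norm_diff_sq: "integrable lborel (\<lambda>v. g v * (norm (v - x))\<^sup>2)"
  using integrable_weighted_norm_diff_sq[OF integrable_density integrable_scaleR_id integrable_norm_sq] .

lemma Var_eq_second_moment: "Var g = 1/2 * ((\<integral>v. g v * (norm v)\<^sup>2 \<partial>lborel) - (norm (mean g))\<^sup>2)"
proof -
  have "(\<integral>v. (norm (v - mean g))\<^sup>2 * g v \<partial>lborel) = (\<integral>v. g v * (norm (v - mean g))\<^sup>2 \<partial>lborel)"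
    by (simp add: mult.commute)
  also have "\<dots> = (\<integral>v. g v * (norm v)\<^sup>2 \<partial>lborel) - (norm (mean g))\<^sup>2"
    unfolding integral_weighted_norm_diff_sq[OF integrable_density integrable_scaleR_id integrable_norm_sq]
    by (simp add: density_mass mean_def[symmetric] power2_norm_eq_inner)
  finally show ?thesis
    by (simp add: Var_def)
qed

lemma Var_nonneg: "0 \<le> Var g"
  unfolding Var_def by (simp add: density_nonneg Bochner_Integration.integral_nonneg)

lemma abs_noise_coeff_le_mult: "\<bar>noise_coeff D (a - v) i\<bar> \<le> (1 + norm a) * (1 + norm v)"
  using abs_noise_coeff_le[of D "a - v" i] norm_diff_le_mult[of a v] by linarith

lemma integrable_noise: "integrable lborel (\<lambda>v. g v *\<^sub>R noise D (a - v) xi)"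
proof (rule integrable_vec_componentwise)
  fix i
  have "integrable lborel (\<lambda>v. g v * noise_coeff D (a - v) i)"
  proof (rule integrable_mult_quadratic_growth[where K="1 + norm a"])
    fix v :: "real^'d"
    have "(1 + norm a) * (1 + norm v) \<le> (1 + norm a) * (1 + norm v)\<^sup>2"
      by (rule mult_left_mono) (simp_all add: power2_sum)
    then show "\<bar>noise_coeff D (a - v) i\<bar> \<le> (1 + norm a) * (1 + norm v)\<^sup>2"
      using abs_noise_coeff_le_mult[of D a v i] by linarith
  qed simp
  then show "integrable lborel (\<lambda>v. (g v *\<^sub>R noise D (a - v) xi) $ i)"
    by (simp add: noise_nth mult.assoc[symmetric])
qed

lemma integrable_noise_coeff_sq: "integrable lborel (\<lambda>v. g v * (noise_coeff D (a - v) i)\<^sup>2)"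
proof (rule integrable_mult_quadratic_growth[where K="(1 + norm a)\<^sup>2"])
  fix v :: "real^'d"
  have "\<bar>noise_coeff D (a - v) i\<bar>\<^sup>2 \<le> ((1 + norm a) * (1 + norm v))\<^sup>2"
    by (rule power_mono[OF abs_noise_coeff_le_mult]) simp
  then show "\<bar>(noise_coeff D (a - v) i)\<^sup>2\<bar> \<le> (1 + norm a)\<^sup>2 * (1 + norm v)\<^sup>2"
    by (simp add: power_mult_distrib)
qed simp

lemma integrable_noise_cross:
  "integrable lborel (\<lambda>v. g v * ((v + lam *\<^sub>R (a - v)) $ i * noise_coeff D (a - v) i))"
proof (rule integrable_mult_quadratic_growth[where K="(1 + \<bar>lam\<bar>) * (1 + norm a)\<^sup>2"])
  show "(\<lambda>v. (v + lam *\<^sub>R (a - v)) $ i * noise_coeff D (a - v) i) \<in> borel_measurable lborel"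
    unfolding measurable_lborel2
    by (intro borel_measurable_continuous_onI)
      (cases D; simp add: noise_coeff_def; intro continuous_intros)
next
  fix v :: "real^'d"
  have "\<bar>(v + lam *\<^sub>R (a - v)) $ i\<bar> \<le> norm v + \<bar>lam\<bar> * norm (a - v)"
    using component_le_norm_cart[of "v + lam *\<^sub>R (a - v)" i] norm_triangle_ineq[of v "lam *\<^sub>R (a - v)"]
    by simp
  also have "\<dots> \<le> (1 + norm a) * (1 + norm v) + \<bar>lam\<bar> * ((1 + norm a) * (1 + norm v))"
  proof (rule add_mono)
    show "norm v \<le> (1 + norm a) * (1 + norm v)"
      using mult_nonneg_nonneg[OF norm_ge_zero norm_ge_zero, of a v] by (simp add: algebra_simps)
  qed (simp add: mult_left_mono norm_diff_le_mult)
  finally have "\<bar>(v + lam *\<^sub>R (a - v)) $ i * noise_coeff D (a - v) i\<bar>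
      \<le> ((1 + norm a) * (1 + norm v) + \<bar>lam\<bar> * ((1 + norm a) * (1 + norm v))) * ((1 + norm a) * (1 + norm v))"
    unfolding abs_mult by (rule mult_mono[OF _ abs_noise_coeff_le_mult]) simp_all
  then show "\<bar>(v + lam *\<^sub>R (a - v)) $ i * noise_coeff D (a - v) i\<bar>
      \<le> (1 + \<bar>lam\<bar>) * (1 + norm a)\<^sup>2 * (1 + norm v)\<^sup>2"
    by (simp add: power2_eq_square algebra_simps)
qed

lemma collision_rhs_eq_integral:
  fixes phi :: "real^'d \<Rightarrow> 'b::{banach,second_countable_topology}"
  assumes "\<And>xi. integrable lborel (\<lambda>v. g v *\<^sub>R (phi (post lam sig D (v_alpha alpha E g) v xi) - phi v))"
  shows "collision_rhs lam sig D alpha E Xi g phi =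
    (\<integral>xi. (\<integral>v. g v *\<^sub>R (phi (post lam sig D (v_alpha alpha E g) v xi) - phi v) \<partial>lborel) \<partial>Xi)"
  using integral_product_scaleR[OF sigma_finite_lborel sigma_finite_lborel assms integrable_density]
  by (simp add: collision_rhs_def density_mass mult.commute)

lemma collision_rhs_id:
  assumes "prob_space Xi" and "\<And>i. integrable Xi (\<lambda>x. x $ i) \<and> (\<integral>x. x $ i \<partial>Xi) = 0"
  shows "collision_rhs lam sig D alpha E Xi g (\<lambda>v. v) = lam *\<^sub>R (v_alpha alpha E g - mean g)"
proof -
  define a where "a = v_alpha alpha E g"
  define c where "c i = sig * (\<integral>v. g v * noise_coeff D (a - v) i \<partial>lborel)" for i
  have split: "g v *\<^sub>R (post lam sig D a v xi - v)
      = lam *\<^sub>R (g v *\<^sub>R a - g v *\<^sub>R v) + sig *\<^sub>R (g v *\<^sub>R noise D (a - v) xi)" for v xi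
    by (simp add: post_def algebra_simps)
  have drift: "integrable lborel (\<lambda>v. lam *\<^sub>R (g v *\<^sub>R a - g v *\<^sub>R v))"
    by (intro integrable_scaleR_right Bochner_Integration.integrable_diff integrable_scaleR_left
        integrable_density integrable_scaleR_id)
  have diffusion: "integrable lborel (\<lambda>v. sig *\<^sub>R (g v *\<^sub>R noise D (a - v) xi))" for xi
    by (intro integrable_scaleR_right integrable_noise)
  have int: "integrable lborel (\<lambda>v. g v *\<^sub>R (post lam sig D a v xi - v))" for xi
    unfolding split by (rule Bochner_Integration.integrable_add[OF drift diffusion])
  have "sig *\<^sub>R (\<integral>v. g v *\<^sub>R noise D (a - v) xi \<partial>lborel) = (\<chi> i. c i * xi $ i)" for xi
    by (simp add: vec_eq_iff integral_vec_nth[OF integrable_noise] noise_nth c_def mult.assoc[symmetric])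
  then have "(\<integral>v. g v *\<^sub>R (post lam sig D a v xi - v) \<partial>lborel) = lam *\<^sub>R (a - mean g) + (\<chi> i. c i * xi $ i)"
    for xi
    unfolding split Bochner_Integration.integral_add[OF drift diffusion] integral_scaleR_right
    using integrable_density integrable_scaleR_id
    by (simp add: Bochner_Integration.integral_diff density_mass mean_def)
  then have "collision_rhs lam sig D alpha E Xi g (\<lambda>v. v) = (\<integral>xi. lam *\<^sub>R (a - mean g) + (\<chi> i. c i * xi $ i) \<partial>Xi)"
    using collision_rhs_eq_integral[OF int[unfolded a_def]] by (simp add: a_def)
  also have "\<dots> = lam *\<^sub>R (a - mean g)"
    by (rule integral_affine_in_components) fact+
  finally show ?thesis
    by (simp add: a_def)
qed

lemma energy_change_eq:
  "g v *\<^sub>R ((norm (post lam sig D a v xi))\<^sup>2 - (norm v)\<^sup>2) =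
      2 * lam * ((g v *\<^sub>R v) \<bullet> a - g v * (norm v)\<^sup>2) + lam\<^sup>2 * (g v * (norm (v - a))\<^sup>2)
    + (\<Sum>i\<in>UNIV. xi $ i * (2 * sig * (g v * ((v + lam *\<^sub>R (a - v)) $ i * noise_coeff D (a - v) i))))
    + (\<Sum>i\<in>UNIV. (xi $ i)\<^sup>2 * (sig\<^sup>2 * (g v * (noise_coeff D (a - v) i)\<^sup>2)))"
  by (simp add: norm_post_sq_diff sum_distrib_left algebra_simps)

lemma integrable_energy_change:
  "integrable lborel (\<lambda>v. g v *\<^sub>R ((norm (post lam sig D a v xi))\<^sup>2 - (norm v)\<^sup>2))"
  unfolding energy_change_eq
  by (intro Bochner_Integration.integrable_add Bochner_Integration.integrable_diff
      Bochner_Integration.integrable_sum integrable_mult_right integrable_inner_left integrable_scaleR_id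
      integrable_norm_sq integrable_norm_diff_sq integrable_noise_cross integrable_noise_coeff_sq)

lemma integral_energy_change:
  "(\<integral>v. g v *\<^sub>R ((norm (post lam sig D a v xi))\<^sup>2 - (norm v)\<^sup>2) \<partial>lborel) =
      2 * lam * (mean g \<bullet> a - (\<integral>v. g v * (norm v)\<^sup>2 \<partial>lborel)) + lam\<^sup>2 * (\<integral>v. g v * (norm (v - a))\<^sup>2 \<partial>lborel)
    + (\<Sum>i\<in>UNIV. xi $ i * (2 * sig * (\<integral>v. g v * ((v + lam *\<^sub>R (a - v)) $ i * noise_coeff D (a - v) i) \<partial>lborel)))
    + (\<Sum>i\<in>UNIV. (xi $ i)\<^sup>2 * (sig\<^sup>2 * (\<integral>v. g v * (noise_coeff D (a - v) i)\<^sup>2 \<partial>lborel)))"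
  unfolding energy_change_eq
  using integrable_scaleR_id integrable_norm_sq integrable_norm_diff_sq integrable_noise_cross
    integrable_noise_coeff_sq
  by (simp del: inner_scaleR_left add: Bochner_Integration.integral_sum mean_def)

lemma sum_integral_noise_coeff_sq:
  "(\<Sum>i\<in>UNIV. (\<integral>v. g v * (noise_coeff D (a - v) i)\<^sup>2 \<partial>lborel))
    = kappa D CARD('d) * (\<integral>v. g v * (norm (v - a))\<^sup>2 \<partial>lborel)"
proof -
  have "(\<Sum>i\<in>UNIV. g v * (noise_coeff D (a - v) i)\<^sup>2) = kappa D CARD('d) * (g v * (norm (v - a))\<^sup>2)" for v
    using sum_noise_coeff_sq[of D "a - v"] by (simp add: sum_distrib_left[symmetric] norm_minus_commute)
  moreover have "(\<Sum>i\<in>UNIV. (\<integral>v. g v * (noise_coeff D (a - v) i)\<^sup>2 \<partial>lborel))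
      = (\<integral>v. (\<Sum>i\<in>UNIV. g v * (noise_coeff D (a - v) i)\<^sup>2) \<partial>lborel)"
    by (rule Bochner_Integration.integral_sum[symmetric]) (rule integrable_noise_coeff_sq)
  ultimately show ?thesis
    by simp
qed

lemma collision_rhs_norm_sq:
  assumes "prob_space Xi"
    and "\<And>i. integrable Xi (\<lambda>x. x $ i) \<and> (\<integral>x. x $ i \<partial>Xi) = 0"
    and "\<And>i. integrable Xi (\<lambda>x. (x $ i)\<^sup>2) \<and> prob_space.variance Xi (\<lambda>x. x $ i) = 1"
  shows "collision_rhs lam sig D alpha E Xi g (\<lambda>v. (norm v)\<^sup>2) =
    2 * lam * (mean g \<bullet> v_alpha alpha E g - (\<integral>v. g v * (norm v)\<^sup>2 \<partial>lborel))
    + (lam\<^sup>2 + sig\<^sup>2 * kappa D CARD('d)) * (\<integral>v. g v * (norm (v - v_alpha alpha E g))\<^sup>2 \<partial>lborel)"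
proof -
  define a where "a = v_alpha alpha E g"
  have "collision_rhs lam sig D alpha E Xi g (\<lambda>v. (norm v)\<^sup>2) =
    (\<integral>xi. 2 * lam * (mean g \<bullet> a - (\<integral>v. g v * (norm v)\<^sup>2 \<partial>lborel)) + lam\<^sup>2 * (\<integral>v. g v * (norm (v - a))\<^sup>2 \<partial>lborel)
      + (\<Sum>i\<in>UNIV. xi $ i * (2 * sig * (\<integral>v. g v * ((v + lam *\<^sub>R (a - v)) $ i * noise_coeff D (a - v) i) \<partial>lborel)))
      + (\<Sum>i\<in>UNIV. (xi $ i)\<^sup>2 * (sig\<^sup>2 * (\<integral>v. g v * (noise_coeff D (a - v) i)\<^sup>2 \<partial>lborel))) \<partial>Xi)"
    unfolding a_def collision_rhs_eq_integral[OF integrable_energy_change] integral_energy_change ..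
  also have "\<dots> = 2 * lam * (mean g \<bullet> a - (\<integral>v. g v * (norm v)\<^sup>2 \<partial>lborel)) + lam\<^sup>2 * (\<integral>v. g v * (norm (v - a))\<^sup>2 \<partial>lborel)
      + (\<Sum>i\<in>UNIV. sig\<^sup>2 * (\<integral>v. g v * (noise_coeff D (a - v) i)\<^sup>2 \<partial>lborel))"
    by (rule integral_quadratic_in_components[OF assms])
  also have "(\<Sum>i\<in>UNIV. sig\<^sup>2 * (\<integral>v. g v * (noise_coeff D (a - v) i)\<^sup>2 \<partial>lborel))
      = sig\<^sup>2 * kappa D CARD('d) * (\<integral>v. g v * (norm (v - a))\<^sup>2 \<partial>lborel)"
    by (simp add: sum_distrib_left[symmetric] sum_integral_noise_coeff_sq)
  finally show ?thesis
    by (simp add: a_def algebra_simps)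
qed

lemma integral_norm_diff_v_alpha_sq_le:
  assumes "continuous_on UNIV E" "bdd_above (range E)" "bdd_below (range E)" "alpha > 0"
  shows "(\<integral>v. g v * (norm (v - v_alpha alpha E g))\<^sup>2 \<partial>lborel)
    \<le> exp (alpha * (Sup (range E) - Inf (range E))) * (2 * Var g)"
proof -
  define w where "w v = exp (- alpha * E v)" for v
  define h where "h = (\<lambda>v. w v * g v)"
  define lo where "lo = exp (- alpha * Sup (range E))"
  define hi where "hi = exp (- alpha * Inf (range E))"
  have [measurable]: "E \<in> borel_measurable lborel"
    using borel_measurable_continuous_onI[OF assms(1)] by simp
  have lo_le: "lo \<le> w v" for v
    using cSup_upper[OF rangeI assms(2), of v] assms(4) by (simp add: w_def lo_def)
  have le_hi: "w v \<le> hi" for v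
    using cInf_lower[OF rangeI assms(3), of v] assms(4) by (simp add: w_def hi_def)
  have "0 < lo"
    by (simp add: lo_def)
  have w_measurable: "w \<in> borel_measurable lborel"
    unfolding w_def by measurable
  have abs_w: "\<bar>w v\<bar> \<le> hi" for v
    using \<open>0 < lo\<close> lo_le[of v] le_hi[of v] by simp
  have int_h: "integrable lborel h"
    using integrable_scaleR_bounded[OF integrable_density w_measurable abs_w] by (simp add: h_def)
  have int_hv: "integrable lborel (\<lambda>v. h v *\<^sub>R v)"
    using integrable_scaleR_bounded[OF integrable_scaleR_id w_measurable abs_w] by (simp add: h_def)
  have int_hsq: "integrable lborel (\<lambda>v. h v * (norm v)\<^sup>2)"
    using integrable_scaleR_bounded[OF integrable_norm_sq w_measurable abs_w] by (simp add: h_def mult.assoc)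
  have lo_pointwise: "lo * (g v * d) \<le> h v * d" if "0 \<le> d" for v d
    using mult_right_mono[OF lo_le[of v], of "g v * d"] density_nonneg[of v] that by (simp add: h_def mult.assoc)
  have hi_pointwise: "h v * d \<le> hi * (g v * d)" if "0 \<le> d" for v d
    using mult_right_mono[OF le_hi[of v], of "g v * d"] density_nonneg[of v] that by (simp add: h_def mult.assoc)
  have "lo * 1 \<le> integral\<^sup>L lborel h"
    unfolding density_mass[symmetric] integral_mult_right_zero[symmetric]
    by (rule integral_mono[OF _ int_h]) (use integrable_density lo_pointwise[of 1] in simp_all)
  then have "0 < integral\<^sup>L lborel h"
    using \<open>0 < lo\<close> by simp
  have v_alpha: "v_alpha alpha E g = (\<integral>v. h v *\<^sub>R v \<partial>lborel) /\<^sub>R integral\<^sup>L lborel h"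
    by (simp add: v_alpha_def h_def w_def)
  have "lo * (\<integral>v. g v * (norm (v - v_alpha alpha E g))\<^sup>2 \<partial>lborel)
      \<le> (\<integral>v. h v * (norm (v - v_alpha alpha E g))\<^sup>2 \<partial>lborel)"
    unfolding integral_mult_right_zero[symmetric]
    by (rule integral_mono)
      (simp_all add: lo_pointwise integrable_norm_diff_sq integrable_weighted_norm_diff_sq[OF int_h int_hv int_hsq])
  also have "\<dots> \<le> (\<integral>v. h v * (norm (v - mean g))\<^sup>2 \<partial>lborel)"
    unfolding v_alpha
    by (rule weighted_mean_minimizes_integral_norm_diff_sq[OF int_h int_hv int_hsq \<open>0 < integral\<^sup>L lborel h\<close>])
  also have "\<dots> \<le> hi * (\<integral>v. g v * (norm (v - mean g))\<^sup>2 \<partial>lborel)"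
    unfolding integral_mult_right_zero[symmetric]
    by (rule integral_mono)
      (simp_all add: hi_pointwise integrable_norm_diff_sq integrable_weighted_norm_diff_sq[OF int_h int_hv int_hsq])
  also have "\<dots> = hi * (2 * Var g)"
    by (simp add: Var_def mult.commute)
  finally have "(\<integral>v. g v * (norm (v - v_alpha alpha E g))\<^sup>2 \<partial>lborel) \<le> hi / lo * (2 * Var g)"
    using \<open>0 < lo\<close> by (simp add: field_simps)
  also have "hi / lo = exp (alpha * (Sup (range E) - Inf (range E)))"
    by (simp add: hi_def lo_def exp_diff[symmetric] algebra_simps)
  finally show ?thesis .
qed

lemma variance_dissipation:
  assumes "prob_space Xi"
    and "\<And>i. integrable Xi (\<lambda>x. x $ i) \<and> (\<integral>x. x $ i \<partial>Xi) = 0"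
    and "\<And>i. integrable Xi (\<lambda>x. (x $ i)\<^sup>2) \<and> prob_space.variance Xi (\<lambda>x. x $ i) = 1"
    and "continuous_on UNIV E" "bdd_above (range E)" "bdd_below (range E)" "alpha > 0"
  defines "C \<equiv> exp (alpha * (Sup (range E) - Inf (range E)))"
  shows "1/2 * (collision_rhs lam sig D alpha E Xi g (\<lambda>v. (norm v)\<^sup>2)
      - 2 * (mean g \<bullet> collision_rhs lam sig D alpha E Xi g (\<lambda>v. v)))
    \<le> - (2 * lam - lam\<^sup>2 * C - sig\<^sup>2 * kappa D CARD('d) * C) * Var g"
proof -
  define J where "J = (\<integral>v. g v * (norm (v - v_alpha alpha E g))\<^sup>2 \<partial>lborel)"
  define k where "k = lam\<^sup>2 + sig\<^sup>2 * kappa D CARD('d)"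
  have "1/2 * (collision_rhs lam sig D alpha E Xi g (\<lambda>v. (norm v)\<^sup>2)
      - 2 * (mean g \<bullet> collision_rhs lam sig D alpha E Xi g (\<lambda>v. v))) = - 2 * lam * Var g + 1/2 * k * J"
    unfolding collision_rhs_norm_sq[OF assms(1-3)] collision_rhs_id[OF assms(1,2)] Var_eq_second_moment J_def k_def
    by (simp add: inner_diff_right power2_norm_eq_inner algebra_simps)
  also have "\<dots> \<le> - 2 * lam * Var g + 1/2 * k * (C * (2 * Var g))"
  proof -
    have "0 \<le> k"
      using kappa_pos[where 'd='d, of D] by (simp add: k_def)
    then have "k * J \<le> k * (C * (2 * Var g))"
      using integral_norm_diff_v_alpha_sq_le[OF assms(4-7)] by (simp add: J_def C_def mult_left_mono)
    then show ?thesis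
      by simp
  qed
  also have "\<dots> = - (2 * lam - lam\<^sup>2 * C - sig\<^sup>2 * kappa D CARD('d) * C) * Var g"
    by (simp add: k_def algebra_simps)
  finally show ?thesis .
qed

end

lemma has_real_derivative_Var:
  fixes f :: "real \<Rightarrow> real^'d \<Rightarrow> real"
  assumes density: "\<And>s. s \<in> S \<Longrightarrow> second_moment_density (f s)" and "t \<in> S"
    and mean: "((\<lambda>s. mean (f s)) has_vector_derivative M') (at t within S)"
    and energy: "((\<lambda>s. \<integral>v. f s v * (norm v)\<^sup>2 \<partial>lborel) has_real_derivative En') (at t within S)"
  shows "((\<lambda>s. Var (f s)) has_real_derivative 1/2 * (En' - 2 * (mean (f t) \<bullet> M'))) (at t within S)"
proof -
  have "((\<lambda>s. mean (f s) \<bullet> mean (f s)) has_derivative (\<lambda>h. mean (f t) \<bullet> (h *\<^sub>R M') + (h *\<^sub>R M') \<bullet> mean (f t)))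
      (at t within S)"
    using has_derivative_inner[OF mean[unfolded has_vector_derivative_def] mean[unfolded has_vector_derivative_def]] .
  then have "((\<lambda>s. (norm (mean (f s)))\<^sup>2) has_real_derivative 2 * (mean (f t) \<bullet> M')) (at t within S)"
    unfolding has_field_derivative_def power2_norm_eq_inner
    by (rule has_derivative_eq_rhs) (auto simp: fun_eq_iff inner_commute algebra_simps)
  then have "((\<lambda>s. 1/2 * ((\<integral>v. f s v * (norm v)\<^sup>2 \<partial>lborel) - (norm (mean (f s)))\<^sup>2))
      has_real_derivative 1/2 * (En' - 2 * (mean (f t) \<bullet> M'))) (at t within S)"
    by (intro DERIV_cmult DERIV_diff energy)
  then show ?thesis
    by (rule has_field_derivative_transform_within[OF _ zero_less_one \<open>t \<in> S\<close>])
      (simp_all add: second_moment_density.Var_eq_second_moment[OF density] \<open>t \<in> S\<close>)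
qed

lemma differential_inequality_exp_decay:
  fixes V :: "real \<Rightarrow> real"
  assumes deriv: "\<And>t. t \<ge> 0 \<Longrightarrow> \<exists>V'. (V has_real_derivative V') (at t within {0..}) \<and> V' \<le> - r * V t"
    and "t \<ge> 0"
  shows "V t \<le> V 0 * exp (- r * t)"
proof -
  define u where "u s = V s * exp (r * s)" for s
  have "continuous (at s within {0..}) V" if "s \<in> {0..}" for s
    using deriv[of s] that DERIV_continuous by auto
  then have "continuous_on {0..t} V"
    using continuous_on_subset[of "{0..}" V "{0..t}"] by (auto simp: continuous_on_eq_continuous_within)
  then have "continuous_on {0..t} u"
    unfolding u_def by (intro continuous_intros)
  have "u t \<le> u 0"
  proof (rule DERIV_nonpos_imp_decreasing_open[OF \<open>t \<ge> 0\<close> _ \<open>continuous_on {0..t} u\<close>])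
    fix x :: real
    assume x: "0 < x" "x < t"
    obtain V' where V': "(V has_real_derivative V') (at x within {0..})" "V' \<le> - r * V x"
      using deriv[of x] x by auto
    have "(V has_real_derivative V') (at x within {0<..})"
      by (rule DERIV_subset[OF V'(1)]) auto
    then have "(V has_real_derivative V') (at x)"
      using x at_within_open[of x "{0<..}"] by simp
    then have "(u has_real_derivative V' * exp (r * x) + exp (r * x) * r * V x) (at x)"
      unfolding u_def by (rule DERIV_mult) (auto intro!: derivative_eq_intros)
    then have "(u has_real_derivative (V' + r * V x) * exp (r * x)) (at x)"
      by (simp add: algebra_simps)
    moreover have "(V' + r * V x) * exp (r * x) \<le> 0"
      using V'(2) by (simp add: mult_nonpos_nonneg)
    ultimately show "\<exists>y. (u has_real_derivative y) (at x) \<and> y \<le> 0"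
      by blast
  qed
  then have "V t * exp (r * t) * exp (- r * t) \<le> V 0 * exp (- r * t)"
    by (simp add: u_def)
  then show ?thesis
    by (simp add: mult.assoc exp_add[symmetric])
qed

lemma exp_decay_tendsto_zero:
  fixes V :: "real \<Rightarrow> real"
  assumes "\<And>t. t \<ge> 0 \<Longrightarrow> 0 \<le> V t" and "\<And>t. t \<ge> 0 \<Longrightarrow> V t \<le> c * exp (- r * t)" and "0 < r"
  shows "(V \<longlongrightarrow> 0) at_top"
proof (rule tendsto_sandwich[OF _ _ tendsto_const])
  show "\<forall>\<^sub>F t in at_top. 0 \<le> V t"
    using eventually_ge_at_top[of 0] by (rule eventually_mono) (rule assms(1))
  show "\<forall>\<^sub>F t in at_top. V t \<le> c * exp (- r * t)"
    using eventually_ge_at_top[of 0] by (rule eventually_mono) (rule assms(2))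
  have "LIM t at_top. - r * t :> at_bot"
    using \<open>0 < r\<close> by (intro filterlim_tendsto_neg_mult_at_bot[OF tendsto_const _ filterlim_ident]) simp
  then have "((\<lambda>t. exp (- r * t)) \<longlongrightarrow> 0) at_top"
    by (rule filterlim_compose[OF exp_at_bot])
  then show "((\<lambda>t. c * exp (- r * t)) \<longlongrightarrow> 0) at_top"
    using tendsto_mult_right_zero by blast
qed

lemma decay_rate_pos:
  fixes lam sig k C :: real
  assumes "0 < k" and "0 < C" and "sig\<^sup>2 < lam / k * (2 / C - lam)"
  shows "0 < 2 * lam - lam\<^sup>2 * C - sig\<^sup>2 * k * C"
  using assms by (simp add: field_simps power2_eq_square)

theorem proposition2:
  fixes E :: "real^'d \<Rightarrow> real"
    and f :: "real \<Rightarrow> real^'d \<Rightarrow> real"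
    and Xi :: "(real^'d) measure"
    and D :: diffusion
    and lam sig alpha :: real
  assumes E_cont: "continuous_on UNIV E"
    and E_pos: "\<And>v. E v > 0"
    and E_bdd_above: "bdd_above (range E)"
    and E_bdd_below: "bdd_below (range E)"
    and lam: "lam \<ge> 0" and sig: "sig \<ge> 0" and alpha: "alpha > 0"
    \<comment> \<open>xi: random vector with i.i.d. components of zero mean and unit variance\<close>
    and Xi_prob: "prob_space Xi"
    and Xi_sets: "sets Xi = sets borel"
    and Xi_indep: "prob_space.indep_vars Xi (\<lambda>_. borel) (\<lambda>i x. x $ i) UNIV"
    and Xi_ident: "\<And>i j. distr Xi borel (\<lambda>x. x $ i) = distr Xi borel (\<lambda>x. x $ j)"
    and Xi_mean: "\<And>i. integrable Xi (\<lambda>x. x $ i) \<and> (LINT x|Xi. x $ i) = 0"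
    and Xi_var: "\<And>i. integrable Xi (\<lambda>x. (x $ i)\<^sup>2) \<and> prob_space.variance Xi (\<lambda>x. x $ i) = 1"
    \<comment> \<open>f(.,t) probability densities with finite second moments, t \<ge> 0\<close>
    and f_meas: "\<And>t. t \<ge> 0 \<Longrightarrow> f t \<in> borel_measurable lborel"
    and f_nonneg: "\<And>t v. t \<ge> 0 \<Longrightarrow> f t v \<ge> 0"
    and f_int: "\<And>t. t \<ge> 0 \<Longrightarrow> integrable lborel (f t)"
    and f_mass: "\<And>t. t \<ge> 0 \<Longrightarrow> (LINT v|lborel. f t v) = 1"
    and f_mom2: "\<And>t. t \<ge> 0 \<Longrightarrow> integrable lborel (\<lambda>v. (norm v)\<^sup>2 * f t v)"
    \<comment> \<open>weak form of the Boltzmann-type equation for phi(v) = v and phi(v) = |v|^2\<close>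
    and eq_mean: "\<And>t. t \<ge> 0 \<Longrightarrow>
        ((\<lambda>s. LINT v|lborel. f s v *\<^sub>R v) has_vector_derivative
          collision_rhs lam sig D alpha E Xi (f t) (\<lambda>v. v)) (at t within {0..})"
    and eq_energy: "\<And>t. t \<ge> 0 \<Longrightarrow>
        ((\<lambda>s. LINT v|lborel. f s v * (norm v)\<^sup>2) has_vector_derivative
          collision_rhs lam sig D alpha E Xi (f t) (\<lambda>v. (norm v)\<^sup>2)) (at t within {0..})"
  defines "C \<equiv> exp (alpha * (Sup (range E) - Inf (range E)))"
  shows "(\<forall>t>0. Var (f t) \<le> Var (f 0) *
             exp (- (2 * lam - lam\<^sup>2 * C - sig\<^sup>2 * kappa D CARD('d) * C) * t))
         \<and> (sig\<^sup>2 < lam / kappa D CARD('d) * (2 / C - lam)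
              \<longrightarrow> ((\<lambda>t. Var (f t)) \<longlongrightarrow> 0) at_top)"
proof -
  define r where "r = 2 * lam - lam\<^sup>2 * C - sig\<^sup>2 * kappa D CARD('d) * C"
  have density: "second_moment_density (f s)" if "s \<in> {0..}" for s
    using that f_meas[of s] by unfold_locales (simp_all add: f_nonneg f_int f_mass f_mom2)
  have decay: "Var (f t) \<le> Var (f 0) * exp (- r * t)" if "t \<ge> 0" for t
  proof (rule differential_inequality_exp_decay[OF _ that])
    fix s :: real
    assume "s \<ge> 0"
    let ?V' = "1/2 * (collision_rhs lam sig D alpha E Xi (f s) (\<lambda>v. (norm v)\<^sup>2)
      - 2 * (mean (f s) \<bullet> collision_rhs lam sig D alpha E Xi (f s) (\<lambda>v. v)))"
    have "((\<lambda>s. Var (f s)) has_real_derivative ?V') (at s within {0..})"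
      using \<open>s \<ge> 0\<close> eq_mean[folded mean_def] eq_energy
      by (intro has_real_derivative_Var density) (simp_all add: has_real_derivative_iff_has_vector_derivative)
    moreover have "?V' \<le> - r * Var (f s)"
      using second_moment_density.variance_dissipation[OF density Xi_prob Xi_mean Xi_var E_cont
          E_bdd_above E_bdd_below alpha] \<open>s \<ge> 0\<close>
      by (simp add: r_def C_def)
    ultimately show "\<exists>V'. ((\<lambda>s. Var (f s)) has_real_derivative V') (at s within {0..}) \<and> V' \<le> - r * Var (f s)"
      by blast
  qed
  have "((\<lambda>t. Var (f t)) \<longlongrightarrow> 0) at_top" if "sig\<^sup>2 < lam / kappa D CARD('d) * (2 / C - lam)"
  proof (rule exp_decay_tendsto_zero[OF _ decay])
    show "0 \<le> Var (f t)" if "t \<ge> 0" for t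
      using second_moment_density.Var_nonneg[OF density] that by simp
    show "0 < r"
      using decay_rate_pos[OF kappa_pos _ that] by (simp add: r_def C_def)
  qed
  with decay show ?thesis
    by (simp add: r_def)
qed

end
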